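(* Let $k$ be a positive integer. A graph $G$ is not b-$\chi$-$k$-bounded if and only if $G$ contains, as an induced subgraph, a minimal $\chi$-$k$-unbounded b-atom.
   Context: $\chi(G)$ denotes the chromatic number. A proper $k$-coloring of $G$ is a surjective map $c:V(G)\to\{1,\ldots,k\}$ with $c(u)\ne c(v)$ for every edge $uv$; a vertex of color $i$ is a b-vertex if it has a neighbor of every color $j\ne i$; a b-$k$-coloring is a proper $k$-coloring in which every color class contains a b-vertex; $\varphi(G)$ is the largest $k$ such that $G$ has a b-$k$-coloring. A b-$t$-atom is a graph $A$ whose vertex set can be partitioned into $t$ sets $D_1,\ldots,D_t$, each $D_i$ containing a special vertex $c_i$, such that each $D_i$ is independent with $|D_i|\le t$ and, for all $i\ne j$, $c_i$ has a neighbor in $D_j$. A graph $G$ is b-$\chi$-$k$-bounded if $\varphi(G')-\chi(G')\le k$ for every induced subgraph $G'$ of $G$. A graph $G$ is a $\chi$-$k$-unbounded b-atom if $\varphi(G)-\chi(G)>k$ and $G$ is a b-$t$-atom for some integer $t$; it is minimal if no proper induced subgraph of it is a $\chi$-$k$-unbounded b-atom. *)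

theory Defs
  imports Main
begin

text \<open>A graph is given by a vertex set V and a symmetric irreflexive edge relation E.
  Induced subgraphs are (V', E) with V' a subset of V.\<close>

definition proper_coloring :: "'a set \<Rightarrow> ('a \<Rightarrow> 'a \<Rightarrow> bool) \<Rightarrow> nat \<Rightarrow> ('a \<Rightarrow> nat) \<Rightarrow> bool" where
  "proper_coloring V E k c \<longleftrightarrow> c ` V = {1..k} \<and> (\<forall>u\<in>V. \<forall>v\<in>V. E u v \<longrightarrow> c u \<noteq> c v)"

definition chromatic_number :: "'a set \<Rightarrow> ('a \<Rightarrow> 'a \<Rightarrow> bool) \<Rightarrow> nat" where
  "chromatic_number V E = (LEAST k. \<exists>c. proper_coloring V E k c)"

definition b_vertex :: "'a set \<Rightarrow> ('a \<Rightarrow> 'a \<Rightarrow> bool) \<Rightarrow> nat \<Rightarrow> ('a \<Rightarrow> nat) \<Rightarrow> 'a \<Rightarrow> bool" where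
  "b_vertex V E k c v \<longleftrightarrow> (\<forall>j\<in>{1..k}. j \<noteq> c v \<longrightarrow> (\<exists>u\<in>V. E v u \<and> c u = j))"

definition b_coloring :: "'a set \<Rightarrow> ('a \<Rightarrow> 'a \<Rightarrow> bool) \<Rightarrow> nat \<Rightarrow> ('a \<Rightarrow> nat) \<Rightarrow> bool" where
  "b_coloring V E k c \<longleftrightarrow> proper_coloring V E k c \<and>
     (\<forall>i\<in>{1..k}. \<exists>v\<in>V. c v = i \<and> b_vertex V E k c v)"

definition b_chromatic_number :: "'a set \<Rightarrow> ('a \<Rightarrow> 'a \<Rightarrow> bool) \<Rightarrow> nat" where
  "b_chromatic_number V E = (GREATEST k. \<exists>c. b_coloring V E k c)"

definition b_atom :: "'a set \<Rightarrow> ('a \<Rightarrow> 'a \<Rightarrow> bool) \<Rightarrow> nat \<Rightarrow> bool" where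
  "b_atom V E t \<longleftrightarrow> (\<exists>(D :: nat \<Rightarrow> 'a set) (c :: nat \<Rightarrow> 'a).
     (\<Union>i\<in>{1..t}. D i) = V \<and>
     (\<forall>i\<in>{1..t}. \<forall>j\<in>{1..t}. i \<noteq> j \<longrightarrow> D i \<inter> D j = {}) \<and>
     (\<forall>i\<in>{1..t}. c i \<in> D i \<and> card (D i) \<le> t \<and>
        (\<forall>u\<in>D i. \<forall>v\<in>D i. \<not> E u v)) \<and>
     (\<forall>i\<in>{1..t}. \<forall>j\<in>{1..t}. i \<noteq> j \<longrightarrow> (\<exists>u\<in>D j. E (c i) u)))"

definition b_chi_bounded :: "nat \<Rightarrow> 'a set \<Rightarrow> ('a \<Rightarrow> 'a \<Rightarrow> bool) \<Rightarrow> bool" where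
  "b_chi_bounded k V E \<longleftrightarrow>
     (\<forall>V' \<subseteq> V. int (b_chromatic_number V' E) - int (chromatic_number V' E) \<le> int k)"

definition chi_unbounded_b_atom :: "nat \<Rightarrow> 'a set \<Rightarrow> ('a \<Rightarrow> 'a \<Rightarrow> bool) \<Rightarrow> bool" where
  "chi_unbounded_b_atom k V E \<longleftrightarrow>
     int (b_chromatic_number V E) - int (chromatic_number V E) > int k \<and> (\<exists>t. b_atom V E t)"

definition minimal_chi_unbounded_b_atom :: "nat \<Rightarrow> 'a set \<Rightarrow> ('a \<Rightarrow> 'a \<Rightarrow> bool) \<Rightarrow> bool" where
  "minimal_chi_unbounded_b_atom k V E \<longleftrightarrow>
     chi_unbounded_b_atom k V E \<and> (\<forall>V' \<subset> V. \<not> chi_unbounded_b_atom k V' E)"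

end

theory Submission
  imports Defs
begin

text \<open>Take an induced subgraph G' with \<phi>(G') - \<chi>(G') > k and a b-coloring of G' with
  t = \<phi>(G') colors. For every color i pick a b-vertex x_i of color i and, for every other
  color j, a neighbour of x_i of color j. These at most t + t(t - 1) vertices induce a
  b-t-atom on which the coloring is still a b-coloring, so \<phi> does not drop, while \<chi>
  cannot grow on an induced subgraph. A \<subseteq>-minimal subset of this atom that is still a
  \<chi>-k-unbounded b-atom is the required minimal one. The converse is immediate from the
  definitions.\<close>

lemma proper_coloring_compress:
  assumes "finite V" and "\<forall>u\<in>V. \<forall>v\<in>V. E u v \<longrightarrow> c u \<noteq> (c v :: nat)"
  shows "\<exists>c'. proper_coloring V E (card (c ` V)) c'"
proof -
  have "finite (c ` V)"
    using assms(1) by simp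
  then obtain f where f: "bij_betw f (c ` V) {1..card (c ` V)}"
    by (metis card_atLeastAtMost diff_Suc_1 finite_atLeastAtMost finite_same_card_bij)
  have "proper_coloring V E (card (c ` V)) (f \<circ> c)"
    unfolding proper_coloring_def
  proof
    show "(f \<circ> c) ` V = {1..card (c ` V)}"
      using f by (simp add: bij_betw_def image_comp)
    show "\<forall>u\<in>V. \<forall>v\<in>V. E u v \<longrightarrow> (f \<circ> c) u \<noteq> (f \<circ> c) v"
      using f assms(2) unfolding bij_betw_def inj_on_def by auto
  qed
  then show ?thesis by blast
qed

lemma proper_coloring_exists:
  assumes "finite V" and "\<And>u. \<not> E u u"
  shows "\<exists>k c. proper_coloring V E k c"
proof -
  obtain f where "bij_betw f V {1..card V}"
    using assms(1) by (metis card_atLeastAtMost diff_Suc_1 finite_atLeastAtMost finite_same_card_bij)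
  then have "proper_coloring V E (card V) f"
    unfolding proper_coloring_def bij_betw_def inj_on_def using assms(2) by metis
  then show ?thesis by blast
qed

lemma chromatic_number_coloring:
  assumes "finite V" and "\<And>u. \<not> E u u"
  shows "\<exists>c. proper_coloring V E (chromatic_number V E) c"
  using proper_coloring_exists[of V E, OF assms] unfolding chromatic_number_def
  by (rule LeastI_ex)

lemma chromatic_number_le:
  assumes "proper_coloring V E m c"
  shows "chromatic_number V E \<le> m"
  using assms unfolding chromatic_number_def by (metis (mono_tags, lifting) Least_le)

lemma chromatic_number_mono:
  assumes "finite V" and "V' \<subseteq> V" and "\<And>u. \<not> E u u"
  shows "chromatic_number V' E \<le> chromatic_number V E"
proof -
  obtain c where c: "proper_coloring V E (chromatic_number V E) c"
    using chromatic_number_coloring[of V E, OF assms(1,3)] by blast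
  have "\<forall>u\<in>V'. \<forall>v\<in>V'. E u v \<longrightarrow> c u \<noteq> c v"
    using c assms(2) unfolding proper_coloring_def by blast
  then obtain c' where "proper_coloring V' E (card (c ` V')) c'"
    using proper_coloring_compress finite_subset[OF assms(2,1)] by blast
  then have "chromatic_number V' E \<le> card (c ` V')"
    by (rule chromatic_number_le)
  also have "\<dots> \<le> card (c ` V)"
    using assms(1,2) by (simp add: card_mono image_mono)
  also have "\<dots> = chromatic_number V E"
    using c unfolding proper_coloring_def by simp
  finally show ?thesis .
qed

text \<open>If color class i of an optimal coloring had no b-vertex, each of its vertices could be
  moved to a color missing from its neighbourhood, which frees color i.\<close>

lemma b_coloring_chromatic_number:
  assumes "finite V" and sym: "\<And>u v. E u v \<Longrightarrow> E v u" and "\<And>u. \<not> E u u"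
  shows "\<exists>c. b_coloring V E (chromatic_number V E) c"
proof (rule ccontr)
  assume no_b: "\<not> ?thesis"
  define m where "m = chromatic_number V E"
  obtain c where c: "proper_coloring V E m c"
    using chromatic_number_coloring[of V E, OF assms(1,3)] m_def by blast
  then obtain i where i: "i \<in> {1..m}" and no_b_i: "\<forall>v\<in>V. c v = i \<longrightarrow> \<not> b_vertex V E m c v"
    using no_b m_def unfolding b_coloring_def by blast
  have "\<exists>j. j \<in> {1..m} \<and> j \<noteq> i \<and> \<not> (\<exists>u\<in>V. E v u \<and> c u = j)" if "v \<in> V" "c v = i" for v
    using no_b_i that unfolding b_vertex_def by blast
  then obtain g where g: "\<And>v. v \<in> V \<Longrightarrow> c v = i \<Longrightarrow>
      g v \<in> {1..m} \<and> g v \<noteq> i \<and> \<not> (\<exists>u\<in>V. E v u \<and> c u = g v)"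
    by metis
  define c' where "c' v = (if c v = i then g v else c v)" for v
  have c_range: "c v \<in> {1..m}" if "v \<in> V" for v
    using c that unfolding proper_coloring_def by blast
  have c_proper: "c u \<noteq> c v" if "u \<in> V" "v \<in> V" "E u v" for u v
    using c that unfolding proper_coloring_def by blast
  have "\<forall>u\<in>V. \<forall>v\<in>V. E u v \<longrightarrow> c' u \<noteq> c' v"
  proof (intro ballI impI)
    fix u v assume uv: "u \<in> V" "v \<in> V" "E u v"
    then show "c' u \<noteq> c' v"
      using c_proper[OF uv] g[OF uv(1)] g[OF uv(2)] sym[OF uv(3)] unfolding c'_def by auto
  qed
  then obtain c'' where "proper_coloring V E (card (c' ` V)) c''"
    using proper_coloring_compress[OF assms(1)] by blast
  then have "m \<le> card (c' ` V)"
    using chromatic_number_le m_def by blast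
  also have "\<dots> \<le> card ({1..m} - {i})"
    using g c_range unfolding c'_def by (intro card_mono) auto
  also have "\<dots> = m - 1"
    using i by simp
  finally show False
    using i by simp
qed

lemma b_coloring_le_card:
  assumes "finite V" and "b_coloring V E k c"
  shows "k \<le> card V"
proof -
  have "c ` V = {1..k}"
    using assms(2) unfolding b_coloring_def proper_coloring_def by blast
  then show ?thesis
    using card_image_le[OF assms(1), of c] by simp
qed

lemma b_chromatic_number_coloring:
  assumes "finite V" and "\<And>u v. E u v \<Longrightarrow> E v u" and "\<And>u. \<not> E u u"
  shows "\<exists>c. b_coloring V E (b_chromatic_number V E) c"
  unfolding b_chromatic_number_def
proof (rule GreatestI_nat)
  show "\<exists>c. b_coloring V E (chromatic_number V E) c"
    using b_coloring_chromatic_number[of V E, OF assms] .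
  show "\<And>y. \<exists>c. b_coloring V E y c \<Longrightarrow> y \<le> card V"
    using b_coloring_le_card[OF assms(1)] by blast
qed

lemma b_chromatic_number_ge:
  assumes "finite V" and "b_coloring V E k c"
  shows "k \<le> b_chromatic_number V E"
  unfolding b_chromatic_number_def
  using assms(2) b_coloring_le_card[OF assms(1)] by (blast intro: Greatest_le_nat)

lemma b_atom_of_b_vertices:
  assumes proper: "\<forall>u\<in>V. \<forall>v\<in>V. E u v \<longrightarrow> c u \<noteq> c v"
    and x: "\<And>i. i \<in> {1..t} \<Longrightarrow> x i \<in> V \<and> c (x i) = i"
    and w: "\<And>i j. i \<in> {1..t} \<Longrightarrow> j \<in> {1..t} \<Longrightarrow> i \<noteq> j \<Longrightarrow>
              w i j \<in> V \<and> E (x i) (w i j) \<and> c (w i j) = j"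
  defines "A \<equiv> x ` {1..t} \<union> {w i j | i j. i \<in> {1..t} \<and> j \<in> {1..t} \<and> i \<noteq> j}"
  shows "b_atom A E t"
proof -
  define D where "D j = {a \<in> A. c a = j}" for j
  have A_cases: "(\<exists>i\<in>{1..t}. a = x i) \<or> (\<exists>i\<in>{1..t}. \<exists>j\<in>{1..t}. i \<noteq> j \<and> a = w i j)"
    if "a \<in> A" for a
    using that unfolding A_def by blast
  have A_V: "a \<in> V" and c_A: "c a \<in> {1..t}" if "a \<in> A" for a
    using A_cases[OF that] x w by auto
  have card_D: "card (D i) \<le> t" if i: "i \<in> {1..t}" for i
  proof -
    have "D i \<subseteq> insert (x i) ((\<lambda>j. w j i) ` ({1..t} - {i}))"
    proof
      fix a assume "a \<in> D i"
      then have "a \<in> A" "c a = i"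
        unfolding D_def by auto
      then show "a \<in> insert (x i) ((\<lambda>j. w j i) ` ({1..t} - {i}))"
        using A_cases x w by fastforce
    qed
    then have "card (D i) \<le> card (insert (x i) ((\<lambda>j. w j i) ` ({1..t} - {i})))"
      by (simp add: card_mono)
    also have "\<dots> \<le> Suc (card ((\<lambda>j. w j i) ` ({1..t} - {i})))"
      by (simp add: card_insert_le_m1)
    also have "\<dots> \<le> Suc (card ({1..t} - {i}))"
      by (simp add: card_image_le)
    also have "\<dots> = t"
      using i by simp
    finally show ?thesis .
  qed
  show ?thesis
    unfolding b_atom_def
  proof (intro exI[of _ D] exI[of _ x] conjI ballI impI)
    show "(\<Union>i\<in>{1..t}. D i) = A"
      unfolding D_def using c_A by auto
  next
    fix i j assume "i \<in> {1..t}" "j \<in> {1..t}" "i \<noteq> j"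
    then show "D i \<inter> D j = {}"
      unfolding D_def by auto
  next
    fix i assume i: "i \<in> {1..t}"
    show "x i \<in> D i"
      unfolding D_def A_def using x[OF i] i by auto
    show "card (D i) \<le> t"
      using card_D[OF i] .
    show "\<not> E u v" if "u \<in> D i" "v \<in> D i" for u v
      using that proper A_V unfolding D_def by (metis (mono_tags, lifting) mem_Collect_eq)
  next
    fix i j assume ij: "i \<in> {1..t}" "j \<in> {1..t}" "i \<noteq> j"
    then have "w i j \<in> D j"
      unfolding D_def A_def using w[OF ij] by blast
    then show "\<exists>u\<in>D j. E (x i) u"
      using w[OF ij] by blast
  qed
qed

lemma b_coloring_on_b_vertices:
  assumes proper: "\<forall>u\<in>V. \<forall>v\<in>V. E u v \<longrightarrow> c u \<noteq> c v"
    and x: "\<And>i. i \<in> {1..t} \<Longrightarrow> x i \<in> V \<and> c (x i) = i"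
    and w: "\<And>i j. i \<in> {1..t} \<Longrightarrow> j \<in> {1..t} \<Longrightarrow> i \<noteq> j \<Longrightarrow>
              w i j \<in> V \<and> E (x i) (w i j) \<and> c (w i j) = j"
  defines "A \<equiv> x ` {1..t} \<union> {w i j | i j. i \<in> {1..t} \<and> j \<in> {1..t} \<and> i \<noteq> j}"
  shows "b_coloring A E t c"
  unfolding b_coloring_def proper_coloring_def
proof (intro conjI ballI impI)
  show "c ` A = {1..t}"
    unfolding A_def using x w by force
next
  fix u v assume "u \<in> A" "v \<in> A" "E u v"
  moreover have "A \<subseteq> V"
    unfolding A_def using x w by auto
  ultimately show "c u \<noteq> c v"
    using proper by blast
next
  fix i assume i: "i \<in> {1..t}"
  have "b_vertex A E t c (x i)"
    unfolding b_vertex_def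
  proof (intro ballI impI)
    fix j assume j: "j \<in> {1..t}" "j \<noteq> c (x i)"
    then have "i \<noteq> j"
      using x[OF i] by simp
    then show "\<exists>u\<in>A. E (x i) u \<and> c u = j"
      unfolding A_def using w[OF i j(1)] i j(1) by blast
  qed
  then show "\<exists>v\<in>A. c v = i \<and> b_vertex A E t c v"
    unfolding A_def using x[OF i] i by blast
qed

lemma b_coloring_contains_b_atom:
  assumes "b_coloring V E t c"
  shows "\<exists>A \<subseteq> V. b_atom A E t \<and> b_coloring A E t c"
proof -
  have proper: "\<forall>u\<in>V. \<forall>v\<in>V. E u v \<longrightarrow> c u \<noteq> c v"
    using assms unfolding b_coloring_def proper_coloring_def by blast
  obtain x where x: "\<And>i. i \<in> {1..t} \<Longrightarrow> x i \<in> V \<and> c (x i) = i \<and> b_vertex V E t c (x i)"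
    using assms unfolding b_coloring_def by metis
  have "\<exists>u. u \<in> V \<and> E (x i) u \<and> c u = j"
    if "i \<in> {1..t}" "j \<in> {1..t}" "i \<noteq> j" for i j
    using x[OF that(1)] that unfolding b_vertex_def by auto
  then obtain w where w: "\<And>i j. i \<in> {1..t} \<Longrightarrow> j \<in> {1..t} \<Longrightarrow> i \<noteq> j \<Longrightarrow>
      w i j \<in> V \<and> E (x i) (w i j) \<and> c (w i j) = j"
    by metis
  define A where "A = x ` {1..t} \<union> {w i j | i j. i \<in> {1..t} \<and> j \<in> {1..t} \<and> i \<noteq> j}"
  have "A \<subseteq> V"
    unfolding A_def using x w by blast
  moreover have "b_atom A E t"
    unfolding A_def using b_atom_of_b_vertices[OF proper] x w by blast
  moreover have "b_coloring A E t c"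
    unfolding A_def using b_coloring_on_b_vertices[OF proper] x w by blast
  ultimately show ?thesis by blast
qed

lemma chi_unbounded_b_atom_if_not_b_chi_bounded:
  assumes "\<not> b_chi_bounded k V E"
    and "finite V" and "\<And>u v. E u v \<Longrightarrow> E v u" and "\<And>u. \<not> E u u"
  shows "\<exists>A \<subseteq> V. chi_unbounded_b_atom k A E"
proof -
  have "\<exists>V' \<subseteq> V. int (b_chromatic_number V' E) - int (chromatic_number V' E) > int k"
    using assms(1) unfolding b_chi_bounded_def by (simp add: not_le)
  then obtain V' where V': "V' \<subseteq> V"
    and gap: "int (b_chromatic_number V' E) - int (chromatic_number V' E) > int k"
    by blast
  have fin: "finite V'"
    using finite_subset[OF V' assms(2)] .
  obtain c where "b_coloring V' E (b_chromatic_number V' E) c"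
    using b_chromatic_number_coloring[of V' E, OF fin assms(3,4)] by blast
  then obtain A where A: "A \<subseteq> V'" "b_atom A E (b_chromatic_number V' E)"
    and c: "b_coloring A E (b_chromatic_number V' E) c"
    by (blast dest: b_coloring_contains_b_atom)
  have "b_chromatic_number V' E \<le> b_chromatic_number A E"
    using b_chromatic_number_ge[OF finite_subset[OF A(1) fin] c] .
  moreover have "chromatic_number A E \<le> chromatic_number V' E"
    using chromatic_number_mono[of V' A E, OF fin A(1) assms(4)] .
  ultimately have "chi_unbounded_b_atom k A E"
    unfolding chi_unbounded_b_atom_def using A(2) gap by auto
  then show ?thesis
    using A(1) V' by blast
qed

lemma finite_minimal_subset:
  assumes "finite A" and "P A"
  shows "\<exists>B \<subseteq> A. P B \<and> (\<forall>B' \<subset> B. \<not> P B')"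
  using assms
proof (induction A rule: finite_psubset_induct)
  case (psubset A)
  show ?case
  proof (cases "\<exists>B' \<subset> A. P B'")
    case True
    then obtain B' where B': "B' \<subset> A" "P B'" by blast
    then obtain B where B: "B \<subseteq> B'" "P B" "\<forall>B'' \<subset> B. \<not> P B''"
      using psubset.IH by meson
    have "B \<subseteq> A"
      using B(1) B'(1) by auto
    then show ?thesis
      using B(2,3) by auto
  next
    case False
    with psubset.prems show ?thesis by auto
  qed
qed

theorem mainTheorem16:
  fixes V :: "'a set" and E :: "'a \<Rightarrow> 'a \<Rightarrow> bool" and k :: nat
  assumes "k > 0"
    and "finite V"
    and "\<And>u v. E u v \<Longrightarrow> E v u"
    and "\<And>u. \<not> E u u"
  shows "\<not> b_chi_bounded k V E \<longleftrightarrow> (\<exists>V' \<subseteq> V. minimal_chi_unbounded_b_atom k V' E)"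
proof
  assume "\<exists>V' \<subseteq> V. minimal_chi_unbounded_b_atom k V' E"
  then obtain V' where "V' \<subseteq> V"
    and "int (b_chromatic_number V' E) - int (chromatic_number V' E) > int k"
    unfolding minimal_chi_unbounded_b_atom_def chi_unbounded_b_atom_def by blast
  then show "\<not> b_chi_bounded k V E"
    unfolding b_chi_bounded_def by (meson not_le)
next
  assume "\<not> b_chi_bounded k V E"
  then obtain A where A: "A \<subseteq> V" "chi_unbounded_b_atom k A E"
    using chi_unbounded_b_atom_if_not_b_chi_bounded[of k V E, OF _ assms(2-4)] by blast
  then obtain B where "B \<subseteq> A" "minimal_chi_unbounded_b_atom k B E"
    using finite_minimal_subset[OF finite_subset[OF A(1) assms(2)], of "\<lambda>B. chi_unbounded_b_atom k B E"]
    unfolding minimal_chi_unbounded_b_atom_def by blast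
  then show "\<exists>V' \<subseteq> V. minimal_chi_unbounded_b_atom k V' E"
    using A(1) by auto
qed

end
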